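(* Let $\alpha=(\alpha_1,\ldots,\alpha_n)$ be a composition, $\sigma\in S_n$, and $i\in\{1,\ldots,n-1\}$ with $\alpha_i=\alpha_{i+1}$. Let $T\in\mathrm{NAF}(\alpha,\sigma)$ and let $U=\Omega_{0,h}(T)$ for some $h\in\{0,\ldots,\alpha_i\}$, and suppose $U$ is non-attacking. Then for all $r\in\{0,\ldots,h-1\}$, $$\mathrm{wt}_{r}(U)\,\rho_r(U)=\mathrm{wt}_{r}(T)\,\rho_r(T).$$
   Context: Permutations are in one-line notation; $\sigma s_i$ is $\sigma$ with the entries in positions $i,i+1$ exchanged. A composition is a sequence of nonnegative integers. The skyline diagram is $\mathrm{dg}(\alpha)=\{(j,r):1\le j\le n,\ 1\le r\le\alpha_j\}$ ($j$ = column, $r$ = row) and the augmented diagram is $\mathrm{adg}(\alpha)=\mathrm{dg}(\alpha)\cup\{(j,0):1\le j\le n\}$ (row $0$ is the basement). For $u=(j,r)\in\mathrm{dg}(\alpha)$: $\mathrm{south}(u)=(j,r-1)$; $\mathrm{leg}(u)=\alpha_j-r$; the left arm set is $\{(j',r-1)\in\mathrm{adg}(\alpha):j'<j,\ \alpha_{j'}<\alpha_j\}$, the right arm set is $\{(j',r)\in\mathrm{dg}(\alpha):j'>j,\ \alpha_{j'}\le\alpha_j\}$, $\mathrm{Arm}(u)$ is their union and $\mathrm{arm}(u)=|\mathrm{Arm}(u)|$. Two boxes of $\mathrm{adg}(\alpha)$ attack each other if they are in the same row, or in consecutive rows with the box in the higher row strictly to the right of the box in the lower row. A filling of shape $\alpha$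 and basement $\tau\in S_n$ is a map $T:\mathrm{adg}(\alpha)\to\{1,\ldots,n\}$ with $T(j,0)=\tau_j$; $\mathrm{NAF}(\alpha,\tau)$ is the set of non-attacking ones (attacking boxes have distinct entries). For integers $a,b$ let $\chi(a,b)=1$ if $a>b$ and $0$ otherwise, and $\chi(a,b,c)=\chi(a,b)+\chi(b,c)-\chi(a,c)$. For a non-attacking filling $T$: a descent is $u\in\mathrm{dg}(\alpha)$ with $T(u)>T(\mathrm{south}(u))$; a triple is $(u,v,w)$ with $u\in\mathrm{dg}(\alpha)$, $w=\mathrm{south}(u)$, $v\in\mathrm{Arm}(u)$, an inversion triple if $\chi(T(u),T(v),T(w))=1$ and a coinversion triple otherwise. For $r\ge0$, let $\mathrm{maj}_{r+1}(T)=\sum(\mathrm{leg}(u)+1)$ over descents $u$ in row $r+1$, let $\mathrm{coinv}_{r,r+1}(T)$ be the number of coinversion triples $(u,v,w)$ with $u$ in row $r+1$, and $\mathrm{wt}_r(T)=q^{\mathrm{maj}_{r+1}(T)}t^{\mathrm{coinv}_{r,r+1}(T)}\prod_{u\in\mathrm{dg}(\alpha)\text{ in row }r+1,\ T(u)\ne T(\mathrm{south}(u))}\frac{1-t}{1-q^{1+\mathrm{leg}(u)}t^{1+\mathrm{arm}(u)}}$ (empty sums are $0$, empty products $1$). Fix $i$ with $\alpha_i=\alpha_{i+1}$. For a filling $T$ and $0\le r\le\alpha_i$, $\mathrm{swap}_r(T)$ exchanges the entries of boxes $(i,r)$ and $(i+1,r)$, and $\Omega_{0,h}=\mathrm{swap}_h\circ\cdots\circ\mathrm{swap}_0$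 (so $\Omega_{0,h}(T)$ has basement $\sigma s_i$). For a non-attacking filling $T$ (any basement) and $0\le r\le\alpha_i-1$, let $a=T(i,r)$, $b=T(i+1,r)$, $c=T(i,r+1)$, $d=T(i+1,r+1)$, $A=\mathrm{arm}(i+1,r+1)$, $\ell=\mathrm{leg}(i+1,r+1)$, and define $\rho_r(T)\in\mathbb{Q}(q,t)$: if $a,b,c,d$ are distinct, $\rho_r(T)=0$ when $\chi(c,d,a)=\chi(c,d,b)$ and $\rho_r(T)=1$ when $\chi(c,d,a)=\chi(d,c,b)$; if exactly three of them are distinct, then $\rho_r(T)=0$ if $b=c$, $\rho_r(T)=1$ if $b=d$, and $\rho_r(T)=t^{1-\chi(d,a,b)}\frac{1-q^{\ell+1}t^{A+1}}{1-q^{\ell+1}t^{A+2}}$ if $a=c$; if $a=c$ and $b=d$, $\rho_r(T)=1$. *)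

theory Defs
  imports "HOL-Computational_Algebra.Polynomial" "HOL-Computational_Algebra.Fraction_Field"
begin

(* Compositions are lists alpha of length n; column j (1-based) has height alpha ! (j-1).
   Boxes are pairs (column, row). Fillings are functions on boxes; only values on adg matter.
   Permutations tau in S_n are lists in one-line notation. *)

definition ht :: "nat list \<Rightarrow> nat \<Rightarrow> nat" where
  "ht \<alpha> j = \<alpha> ! (j - 1)"

definition dg :: "nat list \<Rightarrow> (nat \<times> nat) set" where
  "dg \<alpha> = {(j, r). 1 \<le> j \<and> j \<le> length \<alpha> \<and> 1 \<le> r \<and> r \<le> ht \<alpha> j}"

definition adg :: "nat list \<Rightarrow> (nat \<times> nat) set" where
  "adg \<alpha> = dg \<alpha> \<union> {(j, 0) | j. 1 \<le> j \<and> j \<le> length \<alpha>}"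

definition south :: "nat \<times> nat \<Rightarrow> nat \<times> nat" where
  "south u = (fst u, snd u - 1)"

definition leg :: "nat list \<Rightarrow> nat \<times> nat \<Rightarrow> nat" where
  "leg \<alpha> u = ht \<alpha> (fst u) - snd u"

definition Arm :: "nat list \<Rightarrow> nat \<times> nat \<Rightarrow> (nat \<times> nat) set" where
  "Arm \<alpha> u =
     {(j', snd u - 1) | j'. (j', snd u - 1) \<in> adg \<alpha> \<and> j' < fst u \<and> ht \<alpha> j' < ht \<alpha> (fst u)}
   \<union> {(j', snd u) | j'. (j', snd u) \<in> dg \<alpha> \<and> j' > fst u \<and> ht \<alpha> j' \<le> ht \<alpha> (fst u)}"

definition arm :: "nat list \<Rightarrow> nat \<times> nat \<Rightarrow> nat" where
  "arm \<alpha> u = card (Arm \<alpha> u)"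

definition attack :: "nat \<times> nat \<Rightarrow> nat \<times> nat \<Rightarrow> bool" where
  "attack u v \<longleftrightarrow> u \<noteq> v \<and>
     (snd u = snd v
      \<or> (snd u = snd v + 1 \<and> fst u > fst v)
      \<or> (snd v = snd u + 1 \<and> fst v > fst u))"

definition is_perm :: "nat \<Rightarrow> nat list \<Rightarrow> bool" where
  "is_perm n \<sigma> \<longleftrightarrow> length \<sigma> = n \<and> distinct \<sigma> \<and> set \<sigma> = {1..n}"

definition perm_swap :: "nat list \<Rightarrow> nat \<Rightarrow> nat list" where
  "perm_swap \<sigma> i = \<sigma>[i - 1 := \<sigma> ! i, i := \<sigma> ! (i - 1)]"

definition is_filling :: "nat list \<Rightarrow> nat list \<Rightarrow> (nat \<times> nat \<Rightarrow> nat) \<Rightarrow> bool" where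
  "is_filling \<alpha> \<tau> T \<longleftrightarrow>
     (\<forall>u\<in>adg \<alpha>. T u \<in> {1..length \<alpha>}) \<and>
     (\<forall>j. 1 \<le> j \<and> j \<le> length \<alpha> \<longrightarrow> T (j, 0) = \<tau> ! (j - 1))"

definition nonattacking :: "nat list \<Rightarrow> (nat \<times> nat \<Rightarrow> nat) \<Rightarrow> bool" where
  "nonattacking \<alpha> T \<longleftrightarrow> (\<forall>u\<in>adg \<alpha>. \<forall>v\<in>adg \<alpha>. attack u v \<longrightarrow> T u \<noteq> T v)"

definition NAF :: "nat list \<Rightarrow> nat list \<Rightarrow> (nat \<times> nat \<Rightarrow> nat) set" where
  "NAF \<alpha> \<tau> = {T. is_filling \<alpha> \<tau> T \<and> nonattacking \<alpha> T}"

definition chi :: "nat \<Rightarrow> nat \<Rightarrow> int" where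
  "chi a b = (if a > b then 1 else 0)"

definition chi3 :: "nat \<Rightarrow> nat \<Rightarrow> nat \<Rightarrow> int" where
  "chi3 a b c = chi a b + chi b c - chi a c"

definition maj_row :: "nat list \<Rightarrow> (nat \<times> nat \<Rightarrow> nat) \<Rightarrow> nat \<Rightarrow> nat" where
  "maj_row \<alpha> T k = (\<Sum>u\<in>{u\<in>dg \<alpha>. snd u = k \<and> T u > T (south u)}. leg \<alpha> u + 1)"

definition coinv_rows :: "nat list \<Rightarrow> (nat \<times> nat \<Rightarrow> nat) \<Rightarrow> nat \<Rightarrow> nat" where
  "coinv_rows \<alpha> T r = card {(u, v). u \<in> dg \<alpha> \<and> snd u = r + 1 \<and> v \<in> Arm \<alpha> u
                                 \<and> chi3 (T u) (T v) (T (south u)) \<noteq> 1}"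

definition wt :: "'a::field \<Rightarrow> 'a \<Rightarrow> nat list \<Rightarrow> (nat \<times> nat \<Rightarrow> nat) \<Rightarrow> nat \<Rightarrow> 'a" where
  "wt q t \<alpha> T r = q ^ maj_row \<alpha> T (r + 1) * t ^ coinv_rows \<alpha> T r *
     (\<Prod>u\<in>{u\<in>dg \<alpha>. snd u = r + 1 \<and> T u \<noteq> T (south u)}.
        (1 - t) / (1 - q ^ (1 + leg \<alpha> u) * t ^ (1 + arm \<alpha> u)))"

definition rho :: "'a::field \<Rightarrow> 'a \<Rightarrow> nat list \<Rightarrow> nat \<Rightarrow> (nat \<times> nat \<Rightarrow> nat) \<Rightarrow> nat \<Rightarrow> 'a" where
  "rho q t \<alpha> i T r =
    (let a = T (i, r); b = T (i + 1, r); c = T (i, r + 1); d = T (i + 1, r + 1);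
         A = arm \<alpha> (i + 1, r + 1); l = leg \<alpha> (i + 1, r + 1)
     in if card {a, b, c, d} = 4 then
          (if chi3 c d a = chi3 c d b then 0
           else if chi3 c d a = chi3 d c b then 1 else 0)
        else if card {a, b, c, d} = 3 then
          (if b = c then 0
           else if b = d then 1
           else if a = c then
             t powi (1 - chi3 d a b) * (1 - q ^ (l + 1) * t ^ (A + 1)) / (1 - q ^ (l + 1) * t ^ (A + 2))
           else 0)
        else if a = c \<and> b = d then 1
        else 0)"

definition swap_row :: "nat \<Rightarrow> nat \<Rightarrow> (nat \<times> nat \<Rightarrow> 'b) \<Rightarrow> (nat \<times> nat \<Rightarrow> 'b)" where
  "swap_row i r T = T((i, r) := T (i + 1, r), (i + 1, r) := T (i, r))"

fun Omega :: "nat \<Rightarrow> nat \<Rightarrow> (nat \<times> nat \<Rightarrow> 'b) \<Rightarrow> (nat \<times> nat \<Rightarrow> 'b)" where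
  "Omega i 0 T = swap_row i 0 T"
| "Omega i (Suc h) T = swap_row i (Suc h) (Omega i h T)"

(* Q(q,t) realised as the fraction field of Z[q][t]; q and t are the indeterminates *)
type_synonym qt_field = "int poly poly fract"

definition qv :: qt_field where "qv = Fract [:[:0, 1:]:] 1"
definition tv :: qt_field where "tv = Fract [:0, 1:] 1"

end

theory Submission
  imports Defs "HOL-Combinatorics.Transposition" "HOL-Computational_Algebra.Polynomial_Factorial"
begin

text \<open>
  For \<open>r < h\<close>, the filling \<open>U = \<Omega>\<^sub>0\<^sub>,\<^sub>h(T)\<close> arises from \<open>T\<close> in rows \<open>r\<close> and \<open>r + 1\<close> by exchanging the
  equal-height columns \<open>i\<close> and \<open>i + 1\<close>. Every box of row \<open>r + 1\<close> outside these columns keeps its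
  entry, its south neighbour and, up to the exchange, its arm, so its contributions to \<open>maj\<close>, to
  \<open>coinv\<close> and to the product in \<open>wt\<^sub>r\<close> are the same for \<open>T\<close> and \<open>U\<close>. Since
  \<open>Arm(i, r + 1)\<close> is \<open>Arm(i + 1, r + 1)\<close> together with the box \<open>(i + 1, r + 1)\<close>, the two remaining
  boxes trade their contributions, except for the one triple inside the \<open>2 \<times> 2\<close> square and for
  \<open>arm(i, r + 1) = arm(i + 1, r + 1) + 1\<close>. What is left is an identity in the four entries
  \<open>a, b, c, d\<close> of the square, checked by cases on which of them coincide.
\<close>

lemma (in comm_monoid_set) remove_pair:
  assumes "finite A" "a \<in> A" "b \<in> A" "a \<noteq> b"
  shows "F g A = g a \<^bold>* (g b \<^bold>* F g (A - {a, b}))"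
  using assms by (simp add: remove[of A a] remove[of "A - {a}" b] Diff_insert2[symmetric])

definition row :: "nat list \<Rightarrow> nat \<Rightarrow> (nat \<times> nat) set" where
  "row \<alpha> k = {u \<in> dg \<alpha>. snd u = k}"

definition coinv_box :: "nat list \<Rightarrow> (nat \<times> nat \<Rightarrow> nat) \<Rightarrow> nat \<times> nat \<Rightarrow> nat" where
  "coinv_box \<alpha> F u = card {v \<in> Arm \<alpha> u. chi3 (F u) (F v) (F (south u)) \<noteq> 1}"

definition box_weight :: "'a::field \<Rightarrow> 'a \<Rightarrow> nat list \<Rightarrow> (nat \<times> nat \<Rightarrow> nat) \<Rightarrow> nat \<times> nat \<Rightarrow> 'a" where
  "box_weight q t \<alpha> F u =
     (if F u \<noteq> F (south u) then (1 - t) / (1 - q ^ (1 + leg \<alpha> u) * t ^ (1 + arm \<alpha> u)) else 1)"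

lemma finite_dg: "finite (dg \<alpha>)"
proof (rule finite_subset)
  show "dg \<alpha> \<subseteq> Sigma {1..length \<alpha>} (\<lambda>j. {1..ht \<alpha> j})"
    by (auto simp: dg_def)
qed simp

lemma finite_Arm: "finite (Arm \<alpha> u)"
proof (rule finite_subset)
  show "Arm \<alpha> u \<subseteq> adg \<alpha>"
    by (auto simp: Arm_def adg_def)
  show "finite (adg \<alpha>)"
    using finite_dg by (simp add: adg_def)
qed

lemma Arm_Suc:
  "v \<in> Arm \<alpha> (j, Suc r) \<longleftrightarrow>
     (\<exists>j'. v = (j', r) \<and> (j', r) \<in> adg \<alpha> \<and> j' < j \<and> ht \<alpha> j' < ht \<alpha> j) \<or>
     (\<exists>j'. v = (j', Suc r) \<and> (j', Suc r) \<in> dg \<alpha> \<and> j < j' \<and> ht \<alpha> j' \<le> ht \<alpha> j)"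
  by (auto simp: Arm_def)

lemma snd_Arm_Suc: "v \<in> Arm \<alpha> (j, Suc r) \<Longrightarrow> snd v \<in> {r, Suc r}"
  by (auto simp: Arm_Suc)

lemma finite_row: "finite (row \<alpha> k)"
  using finite_dg by (simp add: row_def)

lemma coinv_rows_eq_sum: "coinv_rows \<alpha> F r = (\<Sum>u\<in>row \<alpha> (Suc r). coinv_box \<alpha> F u)"
proof -
  have "{(u, v). u \<in> dg \<alpha> \<and> snd u = r + 1 \<and> v \<in> Arm \<alpha> u \<and> chi3 (F u) (F v) (F (south u)) \<noteq> 1}
      = Sigma (row \<alpha> (Suc r)) (\<lambda>u. {v \<in> Arm \<alpha> u. chi3 (F u) (F v) (F (south u)) \<noteq> 1})"
    by (auto simp: row_def)
  then show ?thesis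
    by (simp add: coinv_rows_def coinv_box_def card_SigmaI finite_Arm row_def finite_dg)
qed

lemma wt_eq_prod_box_weight:
  "wt q t \<alpha> F r = q ^ maj_row \<alpha> F (Suc r) * t ^ coinv_rows \<alpha> F r *
     (\<Prod>u\<in>row \<alpha> (Suc r). box_weight q t \<alpha> F u)"
proof -
  let ?G = "\<lambda>u. (1 - t) / (1 - q ^ (1 + leg \<alpha> u) * t ^ (1 + arm \<alpha> u))"
  have "{u \<in> dg \<alpha>. snd u = r + 1 \<and> F u \<noteq> F (south u)} = {u \<in> row \<alpha> (Suc r). F u \<noteq> F (south u)}"
    by (auto simp: row_def)
  then have "(\<Prod>u\<in>{u \<in> dg \<alpha>. snd u = r + 1 \<and> F u \<noteq> F (south u)}. ?G u)
      = (\<Prod>u\<in>row \<alpha> (Suc r). box_weight q t \<alpha> F u)"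
    unfolding box_weight_def by (simp only: prod.inter_filter[OF finite_row])
  then show ?thesis
    by (simp add: wt_def)
qed

definition cols_exchanged :: "nat \<Rightarrow> nat \<Rightarrow> (nat \<times> nat \<Rightarrow> 'b) \<Rightarrow> (nat \<times> nat \<Rightarrow> 'b) \<Rightarrow> bool" where
  "cols_exchanged i r U T \<longleftrightarrow> (\<forall>j. \<forall>s\<in>{r, Suc r}. U (j, s) = T (transpose i (Suc i) j, s))"

lemma cols_exchanged_sym: "cols_exchanged i r U T \<Longrightarrow> cols_exchanged i r T U"
  by (simp add: cols_exchanged_def)

lemma Omega_apply: "Omega i h T (j, s) = (if s \<le> h then T (transpose i (Suc i) j, s) else T (j, s))"
  by (induction h arbitrary: j s) (auto simp: swap_row_def transpose_def)

lemma cols_exchanged_Omega: "r < h \<Longrightarrow> cols_exchanged i r (Omega i h T) T"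
  by (simp add: cols_exchanged_def Omega_apply)

lemma chi3_cases: "chi3 x y z = 0 \<or> chi3 x y z = 1"
  by (auto simp: chi3_def chi_def)

lemma chi3_commute: "x \<noteq> y \<Longrightarrow> chi3 y x z = 1 - chi3 x y z"
  by (auto simp: chi3_def chi_def)

lemma chi3_same_ends: "x \<noteq> y \<Longrightarrow> chi3 x y x = 1"
  by (auto simp: chi3_def chi_def)

definition rho_of_entries :: "'a::field \<Rightarrow> 'a \<Rightarrow> nat \<Rightarrow> nat \<Rightarrow> nat \<Rightarrow> nat \<Rightarrow> nat \<Rightarrow> nat \<Rightarrow> 'a" where
  "rho_of_entries q t A l a b c d =
    (if card {a, b, c, d} = 4 then
       (if chi3 c d a = chi3 c d b then 0
        else if chi3 c d a = chi3 d c b then 1 else 0)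
     else if card {a, b, c, d} = 3 then
       (if b = c then 0
        else if b = d then 1
        else if a = c then
          t powi (1 - chi3 d a b) * (1 - q ^ (l + 1) * t ^ (A + 1)) / (1 - q ^ (l + 1) * t ^ (A + 2))
        else 0)
     else if a = c \<and> b = d then 1
     else 0)"

lemma rho_eq_rho_of_entries:
  "rho q t \<alpha> i F r = rho_of_entries q t (arm \<alpha> (Suc i, Suc r)) (leg \<alpha> (Suc i, Suc r))
     (F (i, r)) (F (Suc i, r)) (F (i, Suc r)) (F (Suc i, Suc r))"
  by (simp add: rho_def rho_of_entries_def Let_def)

lemma rho_of_entries_exchange:
  fixes q t :: "'a::field" and A l :: nat
  defines "Y1 \<equiv> 1 - q ^ (l + 1) * t ^ (A + 1)" and "Y2 \<equiv> 1 - q ^ (l + 1) * t ^ (A + 2)"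
  assumes "Y1 \<noteq> 0" "Y2 \<noteq> 0"
    and ab: "a \<noteq> b" and cd: "c \<noteq> d" and ad: "a \<noteq> d" and bc: "b \<noteq> c"
    and coinv: "kU + of_bool (chi3 c d a \<noteq> 1) = kT + of_bool (chi3 d c b \<noteq> 1)"
  shows "t ^ kU * (if d \<noteq> b then (1 - t) / Y2 else 1) * (if c \<noteq> a then (1 - t) / Y1 else 1)
           * rho_of_entries q t A l b a d c
       = t ^ kT * (if c \<noteq> a then (1 - t) / Y2 else 1) * (if d \<noteq> b then (1 - t) / Y1 else 1)
           * rho_of_entries q t A l a b c d"
proof -
  have commute: "chi3 d c z = 1 - chi3 c d z" for z
    using chi3_commute[OF cd] .
  consider (distinct) "a \<noteq> c" "b \<noteq> d" | (left) "a = c" "b \<noteq> d" | (right) "a \<noteq> c" "b = d"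
    | (both) "a = c" "b = d"
    by blast
  then show ?thesis
  proof cases
    case distinct
    then have "card {a, b, c, d} = 4" "card {b, a, d, c} = 4"
      using ab cd ad bc by auto
    moreover have "kU = kT" if "chi3 c d a \<noteq> chi3 c d b"
      using coinv that commute[of b] chi3_cases[of c d a] chi3_cases[of c d b] by auto
    ultimately show ?thesis
      using distinct commute[of a] commute[of b] chi3_cases[of c d a] chi3_cases[of c d b]
      by (auto simp: rho_of_entries_def)
  next
    case left
    then have "card {a, b, c, d} = 3" "card {b, a, d, c} = 3"
      using ab cd ad bc by (auto simp: insert_commute)
    then have "rho_of_entries q t A l a b c d = t powi (1 - chi3 d a b) * Y1 / Y2"
      and "rho_of_entries q t A l b a d c = 1"
      using left bc ad by (simp_all add: rho_of_entries_def Y1_def Y2_def)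
    moreover have "t ^ kU = t ^ kT * t powi (1 - chi3 d a b)"
      using coinv left chi3_same_ends[OF ad] chi3_cases[of d a b] by auto
    ultimately show ?thesis
      using left ad \<open>Y1 \<noteq> 0\<close> by simp
  next
    case right
    then have "card {a, b, c, d} = 3" "card {b, a, d, c} = 3"
      using ab cd ad bc by (auto simp: insert_commute)
    then have "rho_of_entries q t A l a b c d = 1"
      and "rho_of_entries q t A l b a d c = t powi (1 - chi3 c b a) * Y1 / Y2"
      using right bc ad by (simp_all add: rho_of_entries_def Y1_def Y2_def)
    moreover have "t ^ kT = t ^ kU * t powi (1 - chi3 c b a)"
      using coinv right chi3_same_ends[OF bc] chi3_cases[of c b a] by auto
    ultimately show ?thesis
      using right bc \<open>Y1 \<noteq> 0\<close> by simp
  next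
    case both
    then have "card {a, b, c, d} = 2" "card {b, a, d, c} = 2"
      using ab by (auto simp: insert_commute)
    moreover have "kU = kT"
      using coinv both chi3_same_ends[OF ab] chi3_same_ends[OF ab[symmetric]] by simp
    ultimately show ?thesis
      using both by (simp add: rho_of_entries_def)
  qed
qed

context
  fixes \<alpha> :: "nat list" and i :: nat
  assumes i_ge: "1 \<le> i" and i_less: "i < length \<alpha>" and ht_eq: "ht \<alpha> i = ht \<alpha> (Suc i)"
begin

lemma ht_transpose [simp]: "ht \<alpha> (transpose i (Suc i) j) = ht \<alpha> j"
  using ht_eq by (simp add: transpose_def)

lemma dg_transpose_iff [simp]: "(transpose i (Suc i) j, s) \<in> dg \<alpha> \<longleftrightarrow> (j, s) \<in> dg \<alpha>"
  using i_ge i_less ht_eq by (auto simp: transpose_def dg_def)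

lemma adg_transpose_iff [simp]: "(transpose i (Suc i) j, s) \<in> adg \<alpha> \<longleftrightarrow> (j, s) \<in> adg \<alpha>"
proof -
  have "1 \<le> transpose i (Suc i) j \<and> transpose i (Suc i) j \<le> length \<alpha> \<longleftrightarrow> 1 \<le> j \<and> j \<le> length \<alpha>"
    using i_ge i_less by (auto simp: transpose_def)
  then show ?thesis
    by (auto simp: adg_def)
qed

lemma Arm_transpose_other:
  assumes "j \<noteq> i" "j \<noteq> Suc i"
  shows "(transpose i (Suc i) j', s) \<in> Arm \<alpha> (j, Suc r) \<longleftrightarrow> (j', s) \<in> Arm \<alpha> (j, Suc r)"
proof -
  have "transpose i (Suc i) j' < j \<longleftrightarrow> j' < j" "j < transpose i (Suc i) j' \<longleftrightarrow> j < j'"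
    using assms by (auto simp: transpose_def)
  then show ?thesis
    unfolding Arm_Suc using dg_transpose_iff adg_transpose_iff ht_transpose by auto
qed

lemma Arm_left_col:
  "Suc r \<le> ht \<alpha> i \<Longrightarrow> Arm \<alpha> (i, Suc r) = insert (Suc i, Suc r) (Arm \<alpha> (Suc i, Suc r))"
  using i_ge i_less ht_eq by (auto simp: Arm_Suc dg_def less_Suc_eq)

lemma fst_Arm_right_col: "v \<in> Arm \<alpha> (Suc i, Suc r) \<Longrightarrow> fst v \<noteq> i \<and> fst v \<noteq> Suc i"
  using ht_eq by (auto simp: Arm_Suc)

lemma arm_left_col: "Suc r \<le> ht \<alpha> i \<Longrightarrow> arm \<alpha> (i, Suc r) = Suc (arm \<alpha> (Suc i, Suc r))"
  unfolding arm_def by (simp add: Arm_left_col finite_Arm Arm_Suc)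

lemma box_weight_left_col:
  "Suc r \<le> ht \<alpha> i \<Longrightarrow> box_weight q t \<alpha> F (i, Suc r) =
     (if F (i, Suc r) \<noteq> F (i, r)
      then (1 - t) / (1 - q ^ (leg \<alpha> (Suc i, Suc r) + 1) * t ^ (arm \<alpha> (Suc i, Suc r) + 2)) else 1)"
  using ht_eq by (simp add: box_weight_def arm_left_col leg_def south_def)

lemma maj_row_exchanged:
  assumes "cols_exchanged i r U T"
  shows "maj_row \<alpha> U (Suc r) = maj_row \<alpha> T (Suc r)"
proof -
  define \<tau> where "\<tau> v = (transpose i (Suc i) (fst v), snd v)" for v :: "nat \<times> nat"
  have U_row: "U u = T (\<tau> u)" "U (south u) = T (south (\<tau> u))" if "snd u = Suc r" for u
    using assms that by (cases u; simp add: cols_exchanged_def \<tau>_def south_def)+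
  have \<tau>_simps: "\<tau> (\<tau> u) = u" "snd (\<tau> u) = snd u" "\<tau> u \<in> dg \<alpha> \<longleftrightarrow> u \<in> dg \<alpha>" "leg \<alpha> (\<tau> u) = leg \<alpha> u" for u
    using dg_transpose_iff[of "fst u" "snd u"] by (simp_all add: \<tau>_def leg_def)
  show ?thesis
    unfolding maj_row_def
    by (rule sum.reindex_bij_witness[where i = \<tau> and j = \<tau>]) (auto simp: U_row \<tau>_simps)
qed

lemma coinv_box_exchanged_other:
  assumes "cols_exchanged i r U T" "j \<noteq> i" "j \<noteq> Suc i"
  shows "coinv_box \<alpha> U (j, Suc r) = coinv_box \<alpha> T (j, Suc r)"
proof -
  define \<tau> where "\<tau> v = (transpose i (Suc i) (fst v), snd v)" for v :: "nat \<times> nat"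
  have \<tau>_Arm: "\<tau> v \<in> Arm \<alpha> (j, Suc r) \<longleftrightarrow> v \<in> Arm \<alpha> (j, Suc r)" for v
    using Arm_transpose_other[OF assms(2,3)] by (cases v) (simp add: \<tau>_def)
  have U_Arm: "U v = T (\<tau> v)" if "v \<in> Arm \<alpha> (j, Suc r)" for v
    using assms(1) snd_Arm_Suc[OF that] by (cases v) (auto simp: cols_exchanged_def \<tau>_def)
  have U_col: "U (j, s) = T (j, s)" if "s \<in> {r, Suc r}" for s
    using assms that by (auto simp: cols_exchanged_def)
  have "{v \<in> Arm \<alpha> (j, Suc r). chi3 (U (j, Suc r)) (U v) (U (j, r)) \<noteq> 1}
      = \<tau> ` {v \<in> Arm \<alpha> (j, Suc r). chi3 (T (j, Suc r)) (T v) (T (j, r)) \<noteq> 1}"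
  proof (intro equalityI subsetI)
    fix v
    assume "v \<in> {v \<in> Arm \<alpha> (j, Suc r). chi3 (U (j, Suc r)) (U v) (U (j, r)) \<noteq> 1}"
    then have v_Arm: "v \<in> Arm \<alpha> (j, Suc r)" and "chi3 (U (j, Suc r)) (U v) (U (j, r)) \<noteq> 1"
      by simp_all
    then have "chi3 (T (j, Suc r)) (T (\<tau> v)) (T (j, r)) \<noteq> 1"
      using U_Arm[OF v_Arm] U_col by simp
    with v_Arm have "\<tau> v \<in> {v \<in> Arm \<alpha> (j, Suc r). chi3 (T (j, Suc r)) (T v) (T (j, r)) \<noteq> 1}"
      using \<tau>_Arm by blast
    moreover have "v = \<tau> (\<tau> v)"
      by (simp add: \<tau>_def)
    ultimately show "v \<in> \<tau> ` {v \<in> Arm \<alpha> (j, Suc r). chi3 (T (j, Suc r)) (T v) (T (j, r)) \<noteq> 1}"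
      by (rule rev_image_eqI)
  qed (use U_Arm U_col \<tau>_Arm in \<open>auto simp: \<tau>_def\<close>)
  moreover have "inj \<tau>"
    by (auto simp: inj_def \<tau>_def dest: transpose_eq_imp_eq)
  ultimately show ?thesis
    by (simp add: coinv_box_def south_def card_image inj_on_subset)
qed

lemma coinv_box_exchanged_left_col:
  assumes "cols_exchanged i r U T" "Suc r \<le> ht \<alpha> i"
  shows "coinv_box \<alpha> U (i, Suc r) =
    of_bool (chi3 (T (Suc i, Suc r)) (T (i, Suc r)) (T (Suc i, r)) \<noteq> 1) + coinv_box \<alpha> T (Suc i, Suc r)"
proof -
  have U_pair: "U (i, Suc r) = T (Suc i, Suc r)" "U (Suc i, Suc r) = T (i, Suc r)" "U (i, r) = T (Suc i, r)"
    using assms(1) by (simp_all add: cols_exchanged_def)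
  have U_Arm: "U v = T v" if "v \<in> Arm \<alpha> (Suc i, Suc r)" for v
    using assms(1) snd_Arm_Suc[OF that] fst_Arm_right_col[OF that] by (cases v) (auto simp: cols_exchanged_def)
  let ?P = "\<lambda>v. chi3 (T (Suc i, Suc r)) (T v) (T (Suc i, r)) \<noteq> 1"
  have "{v \<in> Arm \<alpha> (i, Suc r). chi3 (U (i, Suc r)) (U v) (U (i, r)) \<noteq> 1}
      = (if ?P (i, Suc r) then insert (Suc i, Suc r) else id) {v \<in> Arm \<alpha> (Suc i, Suc r). ?P v}"
    using U_pair U_Arm by (auto simp: Arm_left_col[OF assms(2)])
  moreover have "(Suc i, Suc r) \<notin> Arm \<alpha> (Suc i, Suc r)"
    by (simp add: Arm_Suc)
  ultimately show ?thesis
    by (simp add: coinv_box_def south_def finite_Arm)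
qed

lemma square_in_row:
  "Suc r \<le> ht \<alpha> i \<Longrightarrow> (i, Suc r) \<in> row \<alpha> (Suc r) \<and> (Suc i, Suc r) \<in> row \<alpha> (Suc r)"
  using i_ge i_less ht_eq by (simp add: row_def dg_def)

lemma coinv_rows_exchanged:
  assumes "cols_exchanged i r U T" "Suc r \<le> ht \<alpha> i"
  shows "coinv_rows \<alpha> U r + of_bool (chi3 (T (i, Suc r)) (T (Suc i, Suc r)) (T (i, r)) \<noteq> 1)
       = coinv_rows \<alpha> T r + of_bool (chi3 (T (Suc i, Suc r)) (T (i, Suc r)) (T (Suc i, r)) \<noteq> 1)"
proof -
  let ?R = "row \<alpha> (Suc r) - {(i, Suc r), (Suc i, Suc r)}"
  have split: "coinv_rows \<alpha> F r
      = coinv_box \<alpha> F (i, Suc r) + (coinv_box \<alpha> F (Suc i, Suc r) + sum (coinv_box \<alpha> F) ?R)" for F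
    unfolding coinv_rows_eq_sum using square_in_row[OF assms(2)]
    by (intro sum.remove_pair finite_row) simp_all
  have "coinv_box \<alpha> U u = coinv_box \<alpha> T u" if "u \<in> ?R" for u
    using that coinv_box_exchanged_other[OF assms(1)] by (cases u) (auto simp: row_def)
  then have rest: "sum (coinv_box \<alpha> U) ?R = sum (coinv_box \<alpha> T) ?R"
    by (rule sum.cong[OF refl])
  have "U (Suc i, Suc r) = T (i, Suc r)" "U (i, Suc r) = T (Suc i, Suc r)" "U (Suc i, r) = T (i, r)"
    using assms(1) by (simp_all add: cols_exchanged_def)
  then show ?thesis
    using coinv_box_exchanged_left_col[OF assms] split rest
      coinv_box_exchanged_left_col[OF cols_exchanged_sym[OF assms(1)] assms(2)]
    by simp
qed

lemma nonattacking_square_distinct: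
  assumes "nonattacking \<alpha> F" "Suc r \<le> ht \<alpha> i"
  shows "F (i, r) \<noteq> F (Suc i, r)" "F (i, Suc r) \<noteq> F (Suc i, Suc r)" "F (i, r) \<noteq> F (Suc i, Suc r)"
proof -
  have "(j, s) \<in> adg \<alpha>" if "j = i \<or> j = Suc i" "s \<le> Suc r" for j s
    using that i_ge i_less ht_eq assms(2) by (auto simp: adg_def dg_def)
  then show "F (i, r) \<noteq> F (Suc i, r)" "F (i, Suc r) \<noteq> F (Suc i, Suc r)" "F (i, r) \<noteq> F (Suc i, Suc r)"
    using assms(1) unfolding nonattacking_def attack_def by force+
qed

lemma wt_split_square:
  assumes "Suc r \<le> ht \<alpha> i"
  shows "wt q t \<alpha> F r = q ^ maj_row \<alpha> F (Suc r) *
    (\<Prod>u\<in>row \<alpha> (Suc r) - {(i, Suc r), (Suc i, Suc r)}. box_weight q t \<alpha> F u) *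
    (t ^ coinv_rows \<alpha> F r
     * (if F (i, Suc r) \<noteq> F (i, r)
        then (1 - t) / (1 - q ^ (leg \<alpha> (Suc i, Suc r) + 1) * t ^ (arm \<alpha> (Suc i, Suc r) + 2)) else 1)
     * (if F (Suc i, Suc r) \<noteq> F (Suc i, r)
        then (1 - t) / (1 - q ^ (leg \<alpha> (Suc i, Suc r) + 1) * t ^ (arm \<alpha> (Suc i, Suc r) + 1)) else 1))"
proof -
  have "(\<Prod>u\<in>row \<alpha> (Suc r). box_weight q t \<alpha> F u) = box_weight q t \<alpha> F (i, Suc r) *
      (box_weight q t \<alpha> F (Suc i, Suc r) *
       (\<Prod>u\<in>row \<alpha> (Suc r) - {(i, Suc r), (Suc i, Suc r)}. box_weight q t \<alpha> F u))"
    using square_in_row[OF assms] by (intro prod.remove_pair finite_row) simp_all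
  then show ?thesis
    unfolding wt_eq_prod_box_weight box_weight_left_col[OF assms]
    by (simp add: box_weight_def south_def add.commute mult_ac)
qed

lemma wt_rho_exchanged:
  fixes q t :: "'a::field"
  assumes exchanged: "cols_exchanged i r U T" and r_less: "Suc r \<le> ht \<alpha> i"
    and "nonattacking \<alpha> T" "nonattacking \<alpha> U"
    and nonvanishing: "\<And>m n. 1 - q ^ m * t ^ Suc n \<noteq> 0"
  shows "wt q t \<alpha> U r * rho q t \<alpha> i U r = wt q t \<alpha> T r * rho q t \<alpha> i T r"
proof -
  define a b c d where "a = T (i, r)" and "b = T (Suc i, r)" and "c = T (i, Suc r)" and "d = T (Suc i, Suc r)"
  define A l where "A = arm \<alpha> (Suc i, Suc r)" and "l = leg \<alpha> (Suc i, Suc r)"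
  let ?R = "row \<alpha> (Suc r) - {(i, Suc r), (Suc i, Suc r)}"
  have U_square: "U (i, r) = b" "U (Suc i, r) = a" "U (i, Suc r) = d" "U (Suc i, Suc r) = c"
    using exchanged by (simp_all add: cols_exchanged_def a_def b_def c_def d_def)
  have distinct: "a \<noteq> b" "c \<noteq> d" "a \<noteq> d" "b \<noteq> c"
    using nonattacking_square_distinct[OF assms(3) r_less] nonattacking_square_distinct(3)[OF assms(4) r_less]
    by (simp_all add: U_square a_def b_def c_def d_def)
  have "box_weight q t \<alpha> U u = box_weight q t \<alpha> T u" if "u \<in> ?R" for u
    using that exchanged by (cases u) (auto simp: row_def box_weight_def cols_exchanged_def south_def)
  then have rest: "(\<Prod>u\<in>?R. box_weight q t \<alpha> U u) = (\<Prod>u\<in>?R. box_weight q t \<alpha> T u)"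
    by (rule prod.cong[OF refl])
  have "1 - q ^ (l + 1) * t ^ (A + 1) \<noteq> 0" "1 - q ^ (l + 1) * t ^ (A + 2) \<noteq> 0"
    using nonvanishing[of "l + 1" A] nonvanishing[of "l + 1" "Suc A"] by (simp_all add: numeral_2_eq_2)
  then have exchange: "t ^ coinv_rows \<alpha> U r
        * (if d \<noteq> b then (1 - t) / (1 - q ^ (l + 1) * t ^ (A + 2)) else 1)
        * (if c \<noteq> a then (1 - t) / (1 - q ^ (l + 1) * t ^ (A + 1)) else 1) * rho_of_entries q t A l b a d c
      = t ^ coinv_rows \<alpha> T r
        * (if c \<noteq> a then (1 - t) / (1 - q ^ (l + 1) * t ^ (A + 2)) else 1)
        * (if d \<noteq> b then (1 - t) / (1 - q ^ (l + 1) * t ^ (A + 1)) else 1) * rho_of_entries q t A l a b c d"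
    using distinct coinv_rows_exchanged[OF exchanged r_less]
    by (intro rho_of_entries_exchange) (simp_all add: a_def b_def c_def d_def)
  have "wt q t \<alpha> U r = q ^ maj_row \<alpha> T (Suc r) * (\<Prod>u\<in>?R. box_weight q t \<alpha> T u) *
    (t ^ coinv_rows \<alpha> U r
     * (if d \<noteq> b then (1 - t) / (1 - q ^ (l + 1) * t ^ (A + 2)) else 1)
     * (if c \<noteq> a then (1 - t) / (1 - q ^ (l + 1) * t ^ (A + 1)) else 1))"
    unfolding wt_split_square[OF r_less] U_square rest maj_row_exchanged[OF exchanged] A_def l_def ..
  moreover have "wt q t \<alpha> T r = q ^ maj_row \<alpha> T (Suc r) * (\<Prod>u\<in>?R. box_weight q t \<alpha> T u) *
    (t ^ coinv_rows \<alpha> T r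
     * (if c \<noteq> a then (1 - t) / (1 - q ^ (l + 1) * t ^ (A + 2)) else 1)
     * (if d \<noteq> b then (1 - t) / (1 - q ^ (l + 1) * t ^ (A + 1)) else 1))"
    unfolding wt_split_square[OF r_less] a_def b_def c_def d_def A_def l_def ..
  moreover have "rho q t \<alpha> i U r = rho_of_entries q t A l b a d c"
    unfolding rho_eq_rho_of_entries U_square A_def l_def ..
  moreover have "rho q t \<alpha> i T r = rho_of_entries q t A l a b c d"
    unfolding rho_eq_rho_of_entries a_def b_def c_def d_def A_def l_def ..
  ultimately show ?thesis
    using exchange by (simp only: mult.assoc)
qed

end

lemma to_fract_power: "to_fract (x ^ n) = to_fract x ^ n"
  by (induction n) simp_all

lemma qv_tv_nonvanishing: "1 - qv ^ m * tv ^ Suc n \<noteq> 0"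
proof
  define P :: "int poly poly" where "P = [:[:0, 1:]:] ^ m * [:0, 1:] ^ Suc n"
  have "qv ^ m * tv ^ Suc n = to_fract P"
    unfolding P_def to_fract_mult to_fract_power by (simp add: qv_def tv_def to_fract_def)
  moreover assume "1 - qv ^ m * tv ^ Suc n = 0"
  ultimately have "to_fract (1 - P) = 0"
    by simp
  then have "poly (1 - P) 0 = 0"
    by (simp only: to_fract_eq_0_iff poly_0)
  then show False
    by (simp add: P_def)
qed

theorem lemma3p10:
  fixes \<alpha> \<sigma> :: "nat list" and i h r :: nat and T :: "nat \<times> nat \<Rightarrow> nat"
  assumes "is_perm (length \<alpha>) \<sigma>"
    and "1 \<le> i" and "i < length \<alpha>"
    and "ht \<alpha> i = ht \<alpha> (i + 1)"
    and "T \<in> NAF \<alpha> \<sigma>"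
    and "h \<le> ht \<alpha> i"
    and "nonattacking \<alpha> (Omega i h T)"
    and "r < h"
  shows "wt qv tv \<alpha> (Omega i h T) r * rho qv tv \<alpha> i (Omega i h T) r
       = wt qv tv \<alpha> T r * rho qv tv \<alpha> i T r"
proof (rule wt_rho_exchanged)
  show "1 \<le> i" "i < length \<alpha>" "nonattacking \<alpha> (Omega i h T)"
    by fact+
  show "ht \<alpha> i = ht \<alpha> (Suc i)"
    using \<open>ht \<alpha> i = ht \<alpha> (i + 1)\<close> by simp
  show "cols_exchanged i r (Omega i h T) T"
    using \<open>r < h\<close> by (rule cols_exchanged_Omega)
  show "Suc r \<le> ht \<alpha> i"
    using \<open>r < h\<close> \<open>h \<le> ht \<alpha> i\<close> by simp
  show "nonattacking \<alpha> T"
    using \<open>T \<in> NAF \<alpha> \<sigma>\<close> by (simp add: NAF_def)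
  show "1 - qv ^ m * tv ^ Suc n \<noteq> 0" for m n
    by (rule qv_tv_nonvanishing)
qed

end
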